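(* Let $W$ be a prewedge and $a,b,v\in W$. Then $a+v\le b+v$ if and only if $a+\tfrac1n v\le b+\tfrac1n v$ for every integer $n\ge1$.
   Context: A prewedge is a set $W$ with a commutative associative addition with neutral element $0$ and a multiplication $[0,\infty)\times W\to W$, $(\lambda,v)\mapsto\lambda v$, such that $\lambda(\eta v)=(\lambda\eta)v$, $0v=0$, $1v=v$, $(\lambda+\eta)v=\lambda v+\eta v$, $\lambda(v+w)=\lambda v+\lambda w$ for all $\lambda,\eta\ge0$, $v,w\in W$. It carries the preorder $v\le w$ iff $v+z=w$ for some $z\in W$. *)

theory Defs
  imports Main "HOL.Real"
begin

text \<open>A prewedge, with underlying set the whole type 'a (always nonempty, containing 0).
  Scalar multiplication is given as a function on all reals, but only its restriction
  to nonnegative scalars is constrained/used.\<close>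

definition prewedge :: "('a \<Rightarrow> 'a \<Rightarrow> 'a) \<Rightarrow> 'a \<Rightarrow> (real \<Rightarrow> 'a \<Rightarrow> 'a) \<Rightarrow> bool" where
  "prewedge add z smul \<longleftrightarrow>
     (\<forall>u v. add u v = add v u) \<and>
     (\<forall>u v w. add (add u v) w = add u (add v w)) \<and>
     (\<forall>v. add z v = v) \<and>
     (\<forall>l e v. l \<ge> 0 \<longrightarrow> e \<ge> 0 \<longrightarrow> smul l (smul e v) = smul (l * e) v) \<and>
     (\<forall>v. smul 0 v = z) \<and>
     (\<forall>v. smul 1 v = v) \<and>
     (\<forall>l e v. l \<ge> 0 \<longrightarrow> e \<ge> 0 \<longrightarrow> smul (l + e) v = add (smul l v) (smul e v)) \<and>
     (\<forall>l v w. l \<ge> 0 \<longrightarrow> smul l (add v w) = add (smul l v) (smul l w))"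

definition pw_le :: "('a \<Rightarrow> 'a \<Rightarrow> 'a) \<Rightarrow> 'a \<Rightarrow> 'a \<Rightarrow> bool" where
  "pw_le add v w \<longleftrightarrow> (\<exists>z. add v z = w)"

end

theory Submission
  imports Defs
begin

text \<open>Scaling \<open>a + v \<le> b + v\<close> by \<open>1/n\<close> gives \<open>a/n + v/n \<le> b/n + v/n\<close>. Since \<open>\<le>\<close> is
  invariant under translation, \<open>x + u \<le> y + u\<close> propagates to \<open>n x + u \<le> n y + u\<close>:
  \<open>(k+1) x + u = k x + (x + u) \<le> k x + (y + u) = y + (k x + u) \<le> y + (k y + u)\<close>.
  With \<open>x = a/n\<close>, \<open>y = b/n\<close>, \<open>u = v/n\<close> this is the claim; the converse is the case \<open>n = 1\<close>.\<close>

locale prewedge_structure =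
  fixes add :: "'a \<Rightarrow> 'a \<Rightarrow> 'a" and z :: 'a and smul :: "real \<Rightarrow> 'a \<Rightarrow> 'a"
  assumes prewedge: "prewedge add z smul"
begin

sublocale abel_semigroup add
  using prewedge by unfold_locales (auto simp: prewedge_def)

lemma add_zero_left: "add z v = v"
  using prewedge unfolding prewedge_def by blast

lemma smul_smul: "l \<ge> 0 \<Longrightarrow> e \<ge> 0 \<Longrightarrow> smul l (smul e v) = smul (l * e) v"
  using prewedge by (simp add: prewedge_def)

lemma smul_zero_left: "smul 0 v = z"
  using prewedge by (simp add: prewedge_def)

lemma smul_one: "smul 1 v = v"
  using prewedge by (simp add: prewedge_def)

lemma smul_add_left: "l \<ge> 0 \<Longrightarrow> e \<ge> 0 \<Longrightarrow> smul (l + e) v = add (smul l v) (smul e v)"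
  using prewedge by (simp add: prewedge_def)

lemma smul_add_right: "l \<ge> 0 \<Longrightarrow> smul l (add v w) = add (smul l v) (smul l w)"
  using prewedge by (simp add: prewedge_def)

lemma smul_of_nat_Suc: "smul (real (Suc n)) v = add (smul (real n) v) v"
  using smul_add_left[of "real n" 1 v] by (simp add: smul_one add.commute)

lemma pw_le_refl: "pw_le add v v"
  unfolding pw_le_def by (metis add_zero_left commute)

lemma pw_le_trans: "pw_le add u v \<Longrightarrow> pw_le add v w \<Longrightarrow> pw_le add u w"
  unfolding pw_le_def by (metis assoc)

lemma pw_le_add_left: "pw_le add v w \<Longrightarrow> pw_le add (add x v) (add x w)"
  unfolding pw_le_def by (metis assoc)

lemma pw_le_smul: "l \<ge> 0 \<Longrightarrow> pw_le add v w \<Longrightarrow> pw_le add (smul l v) (smul l w)"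
  unfolding pw_le_def by (metis smul_add_right)

lemma pw_le_add_of_nat_smul:
  assumes "pw_le add (add x u) (add y u)"
  shows "pw_le add (add (smul (real n) x) u) (add (smul (real n) y) u)"
proof (induction n)
  case 0
  show ?case by (simp add: smul_zero_left pw_le_refl)
next
  case (Suc n)
  have "pw_le add (add (smul (real n) x) (add x u)) (add (smul (real n) x) (add y u))"
    using assms by (rule pw_le_add_left)
  moreover have "pw_le add (add y (add (smul (real n) x) u)) (add y (add (smul (real n) y) u))"
    using Suc.IH by (rule pw_le_add_left)
  ultimately show ?case
    unfolding smul_of_nat_Suc by (metis assoc commute pw_le_trans)
qed

lemma pw_le_add_inverse_smul:
  assumes le: "pw_le add (add a v) (add b v)" and "n \<ge> 1"
  shows "pw_le add (add a (smul (1 / real n) v)) (add b (smul (1 / real n) v))"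
proof -
  have "pw_le add (add (smul (1 / real n) a) (smul (1 / real n) v))
                  (add (smul (1 / real n) b) (smul (1 / real n) v))"
    using pw_le_smul[OF _ le, of "1 / real n"] by (simp add: smul_add_right)
  then have "pw_le add (add (smul (real n) (smul (1 / real n) a)) (smul (1 / real n) v))
                       (add (smul (real n) (smul (1 / real n) b)) (smul (1 / real n) v))"
    by (rule pw_le_add_of_nat_smul)
  moreover have "smul (real n) (smul (1 / real n) x) = x" for x
    using \<open>n \<ge> 1\<close> by (simp add: smul_smul smul_one)
  ultimately show ?thesis by simp
qed

end

theorem mainTheorem8:
  fixes add :: "'a \<Rightarrow> 'a \<Rightarrow> 'a" and z :: 'a and smul :: "real \<Rightarrow> 'a \<Rightarrow> 'a"
    and a b v :: 'a
  assumes "prewedge add z smul"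
  shows "pw_le add (add a v) (add b v) \<longleftrightarrow>
         (\<forall>n::nat. n \<ge> 1 \<longrightarrow> pw_le add (add a (smul (1 / real n) v)) (add b (smul (1 / real n) v)))"
proof -
  interpret prewedge_structure add z smul
    using assms by unfold_locales
  show ?thesis
  proof
    assume "\<forall>n::nat. n \<ge> 1 \<longrightarrow> pw_le add (add a (smul (1 / real n) v)) (add b (smul (1 / real n) v))"
    then show "pw_le add (add a v) (add b v)"
      by (metis le_refl of_nat_1 div_by_1 smul_one)
  qed (simp add: pw_le_add_inverse_smul)
qed

end
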